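(* Let $n\ge 2$ be an integer and let $$ P(x)=x^{2n}+ d_{2n-1} x^{2n-1}+\dots + d_1 x +1 $$ with real coefficients $d_i$ satisfying $d_{2n-i}=d_i$ for $i=1,\dots,2n-1$ and $|d_i|<1/(2n-2)$ for all $i$. Then all roots of $P$ lie on the unit circle. *)

theory Defs
  imports "HOL-Analysis.Analysis"
begin

end

theory Submission
  imports Defs
begin

text \<open>For a palindromic polynomial \<open>P\<close> of degree \<open>2n\<close> one has \<open>P(e\<^sup>i\<^sup>t) = e\<^sup>i\<^sup>n\<^sup>t g(t)\<close>
  with the real trigonometric polynomial \<open>g(t) = \<Sum> c\<^sub>i cos((i - n) t)\<close>. At \<open>t = k\<pi>/n\<close>
  the terms \<open>i = 0, 2n\<close> contribute \<open>2(-1)\<^sup>k\<close> while the middle coefficients contribute less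
  than \<open>2\<close> in absolute value, so \<open>g\<close> changes sign on each of the \<open>2n\<close> intervals
  \<open>(k\<pi>/n, (k+1)\<pi>/n)\<close> covering \<open>[0, 2\<pi>)\<close>. This yields \<open>2n\<close> distinct roots of \<open>P\<close> on the unit
  circle, which by degree are all of them.\<close>

definition palindromic_cos_sum :: "(nat \<Rightarrow> real) \<Rightarrow> nat \<Rightarrow> real \<Rightarrow> real" where
  "palindromic_cos_sum c n t = (\<Sum>i\<le>2*n. c i * cos ((real i - real n) * t))"

lemma continuous_on_palindromic_cos_sum: "continuous_on S (palindromic_cos_sum c n)"
  unfolding palindromic_cos_sum_def by (intro continuous_intros)

lemma sum_atMost_split_ends:
  fixes h :: "nat \<Rightarrow> 'a::comm_monoid_add"
  assumes "m \<ge> 1"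
  shows "(\<Sum>i\<le>m. h i) = h 0 + h m + (\<Sum>i=1..m-1. h i)"
proof -
  have "{..m} = insert 0 (insert m {1..m-1})" using assms by auto
  then show ?thesis using assms by (simp add: add.assoc)
qed

lemma palindromic_sin_sum_eq_0:
  assumes "\<And>i. i \<le> 2*n \<Longrightarrow> c (2*n - i) = c i"
  shows "(\<Sum>i\<le>2*n. c i * sin ((real i - real n) * t)) = 0"
proof -
  let ?S = "\<Sum>i\<le>2*n. c i * sin ((real i - real n) * t)"
  have "?S = (\<Sum>i=0..2*n. c (2*n - i) * sin ((real (2*n - i) - real n) * t))"
    by (subst sum.atLeastAtMost_rev) (simp add: atMost_atLeast0)
  also have "\<dots> = (\<Sum>i=0..2*n. - (c i * sin ((real i - real n) * t)))"
  proof (rule sum.cong)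
    fix i assume "i \<in> {0..2*n}"
    then have "i \<le> 2*n" by simp
    moreover have "sin ((real n - real i) * t) = - sin ((real i - real n) * t)"
      by (metis minus_diff_eq mult_minus_left sin_minus)
    ultimately show "c (2*n - i) * sin ((real (2*n - i) - real n) * t)
        = - (c i * sin ((real i - real n) * t))"
      using assms by (simp add: of_nat_diff)
  qed simp
  also have "\<dots> = - ?S" by (simp add: sum_negf atMost_atLeast0)
  finally show ?thesis by simp
qed

lemma palindromic_poly_cis:
  assumes "\<And>i. i \<le> 2*n \<Longrightarrow> c (2*n - i) = c i"
  shows "(\<Sum>i\<le>2*n. complex_of_real (c i) * cis t ^ i)
    = cis (real n * t) * complex_of_real (palindromic_cos_sum c n t)"
proof -
  let ?\<theta> = "\<lambda>i. (real i - real n) * t"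
  have "(\<Sum>i\<le>2*n. complex_of_real (c i) * cis t ^ i)
      = cis (real n * t) * (\<Sum>i\<le>2*n. complex_of_real (c i) * cis (?\<theta> i))"
    unfolding sum_distrib_left
  proof (rule sum.cong)
    fix i
    have "cis (real n * t) * cis (?\<theta> i) = cis t ^ i"
      unfolding Complex.DeMoivre cis_mult by (simp add: algebra_simps)
    then show "complex_of_real (c i) * cis t ^ i = cis (real n * t) * (complex_of_real (c i) * cis (?\<theta> i))"
      by (simp add: mult_ac)
  qed simp
  also have "(\<Sum>i\<le>2*n. complex_of_real (c i) * cis (?\<theta> i))
      = (\<Sum>i\<le>2*n. complex_of_real (c i * cos (?\<theta> i)) + \<i> * complex_of_real (c i * sin (?\<theta> i)))"
    by (rule sum.cong) (simp_all add: cis.ctr Complex_eq algebra_simps)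
  also have "\<dots> = complex_of_real (palindromic_cos_sum c n t)"
    using palindromic_sin_sum_eq_0[of n c t] assms
    by (simp only: sum.distrib flip: sum_distrib_left of_real_sum)
      (simp add: palindromic_cos_sum_def)
  finally show ?thesis .
qed

lemma palindromic_cos_sum_alternates:
  assumes "n \<ge> 1" and "c 0 = 1" and "c (2*n) = 1" and "(\<Sum>i=1..2*n-1. \<bar>c i\<bar>) < 2"
  shows "(-1)^k * palindromic_cos_sum c n (real k * pi / real n) > 0"
proof -
  let ?x = "real k * pi / real n"
  define R where "R = (\<Sum>i=1..2*n-1. c i * cos ((real i - real n) * ?x))"
  have two_n: "2*n \<ge> 1" using assms(1) by simp
  have "(real 0 - real n) * ?x = - (real k * pi)" "(real (2*n) - real n) * ?x = real k * pi"
    using assms(1) by (simp_all add: field_simps)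
  then have "palindromic_cos_sum c n ?x = 2 * (-1)^k + R"
    unfolding palindromic_cos_sum_def R_def sum_atMost_split_ends[OF two_n]
    using assms(2,3) by (simp only: cos_minus cos_npi)
  then have "(-1)^k * palindromic_cos_sum c n ?x = 2 + (-1)^k * R"
    by (simp add: algebra_simps)
  moreover have "\<bar>R\<bar> \<le> (\<Sum>i=1..2*n-1. \<bar>c i\<bar>)"
    unfolding R_def
    by (rule order_trans[OF sum_abs sum_mono]) (simp add: abs_mult mult_left_le)
  moreover have "\<bar>(-1)^k * R\<bar> = \<bar>R\<bar>" by (simp add: abs_mult)
  ultimately show ?thesis using assms(4) by linarith
qed

lemma IVT_strict_sign_change:
  fixes f :: "real \<Rightarrow> real"
  assumes "a < b" and "continuous_on {a..b} f" and "f a * f b < 0"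
  shows "\<exists>x. a < x \<and> x < b \<and> f x = 0"
proof -
  have "\<exists>x. a \<le> x \<and> x \<le> b \<and> f x = 0"
  proof (cases "f a < 0")
    case True
    with assms show ?thesis by (intro IVT') (auto simp: mult_less_0_iff)
  next
    case False
    with assms show ?thesis by (intro IVT2') (auto simp: mult_less_0_iff)
  qed
  moreover have "f a \<noteq> 0" "f b \<noteq> 0" using assms(3) by auto
  ultimately show ?thesis by (metis order.order_iff_strict)
qed

lemma zero_between_alternating_samples:
  fixes f :: "real \<Rightarrow> real"
  assumes "h > 0" and "continuous_on UNIV f" and "\<And>k. (-1)^k * f (real k * h) > 0"
  shows "\<exists>x. real k * h < x \<and> x < real (Suc k) * h \<and> f x = 0"
proof (rule IVT_strict_sign_change)
  show "real k * h < real (Suc k) * h" using assms(1) by simp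
  show "continuous_on {real k * h..real (Suc k) * h} f"
    using assms(2) continuous_on_subset by blast
  have "0 < ((-1)^k * f (real k * h)) * ((-1)^(Suc k) * f (real (Suc k) * h))"
    using assms(3)[of k] assms(3)[of "Suc k"] by (rule mult_pos_pos)
  then show "f (real k * h) * f (real (Suc k) * h) < 0"
    by (simp add: algebra_simps)
qed

lemma inj_on_cis: "inj_on cis {0..<2*pi}"
proof (rule inj_onI)
  fix a b assume ab: "a \<in> {0..<2*pi}" "b \<in> {0..<2*pi}" and "cis a = cis b"
  then have "sin a = sin b \<and> cos a = cos b" by (simp add: complex_eq_iff)
  then obtain m :: int where m: "a = b + 2 * pi * m" using sin_cos_eq_iff by blast
  have "\<bar>2 * pi * m\<bar> < 2 * pi * 1" using ab m by auto
  then have "m = 0" by (simp add: abs_mult)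
  with m show "a = b" by simp
qed

lemma polyfun_roots_eq_if_card_ge:
  fixes c :: "nat \<Rightarrow> 'a::{idom,real_normed_div_algebra}"
  assumes "c k \<noteq> 0" and "T \<subseteq> {z. (\<Sum>i\<le>k. c i * z^i) = 0}" and "k \<le> card T"
  shows "{z. (\<Sum>i\<le>k. c i * z^i) = 0} = T"
proof -
  have "finite {z. (\<Sum>i\<le>k. c i * z^i) = 0}" "card {z. (\<Sum>i\<le>k. c i * z^i) = 0} \<le> k"
    using polyfun_roots_finite[of c k k] polyfun_roots_card[of c k k] assms(1) by simp_all
  with assms(2,3) show ?thesis by (intro card_seteq[symmetric]) auto
qed

lemma palindromic_roots_on_unit_circle:
  fixes c :: "nat \<Rightarrow> real" and z :: complex
  assumes "n \<ge> 1" and sym: "\<And>i. i \<le> 2*n \<Longrightarrow> c (2*n - i) = c i" and "c (2*n) = 1"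
    and "(\<Sum>i=1..2*n-1. \<bar>c i\<bar>) < 2"
    and "(\<Sum>i\<le>2*n. complex_of_real (c i) * z ^ i) = 0"
  shows "cmod z = 1"
proof -
  let ?g = "palindromic_cos_sum c n"
  have "c 0 = 1" using sym[of "2*n"] assms(3) by simp
  then have "\<exists>x. real k * (pi / real n) < x \<and> x < real (Suc k) * (pi / real n) \<and> ?g x = 0" for k
    using assms palindromic_cos_sum_alternates[of n c]
    by (intro zero_between_alternating_samples continuous_on_palindromic_cos_sum) auto
  then obtain t where t: "\<And>k. real k * pi / real n < t k \<and> t k < real (Suc k) * pi / real n"
    and zero: "\<And>k. ?g (t k) = 0"
    by (metis times_divide_eq_right)
  have "strict_mono_on {..<2*n} t"
  proof (rule strict_mono_onI)
    fix a b :: nat assume "a < b"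
    then have "real (Suc a) * pi / real n \<le> real b * pi / real n"
      by (intro divide_right_mono mult_right_mono) auto
    then show "t a < t b" using t[of a] t[of b] by linarith
  qed
  moreover have "t ` {..<2*n} \<subseteq> {0..<2*pi}"
  proof clarify
    fix k assume "k < 2*n"
    then have "real (Suc k) * pi / real n \<le> real (2*n) * pi / real n"
      by (intro divide_right_mono mult_right_mono) auto
    then show "t k \<in> {0..<2*pi}"
      using t[of k] assms(1) by (auto intro: order.trans[rotated] less_imp_le)
  qed
  ultimately have "inj_on (cis \<circ> t) {..<2*n}"
    by (metis comp_inj_on inj_on_subset inj_on_cis strict_mono_on_imp_inj_on)
  then have "card ((cis \<circ> t) ` {..<2*n}) = 2*n" using card_image card_lessThan by metis
  moreover have "(cis \<circ> t) ` {..<2*n} \<subseteq> {w. (\<Sum>i\<le>2*n. complex_of_real (c i) * w ^ i) = 0}"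
    using palindromic_poly_cis[of n c] sym zero by auto
  ultimately have "{w. (\<Sum>i\<le>2*n. complex_of_real (c i) * w ^ i) = 0} = (cis \<circ> t) ` {..<2*n}"
    using assms(3) by (intro polyfun_roots_eq_if_card_ge) auto
  then have "z \<in> (cis \<circ> t) ` {..<2*n}" using assms(5) by blast
  then show ?thesis by auto
qed

theorem lemma3:
  fixes n :: nat and d :: "nat \<Rightarrow> real" and z :: complex
  assumes "n \<ge> 2"
    and "\<And>i. 1 \<le> i \<Longrightarrow> i \<le> 2*n - 1 \<Longrightarrow> d (2*n - i) = d i"
    and "\<And>i. 1 \<le> i \<Longrightarrow> i \<le> 2*n - 1 \<Longrightarrow> \<bar>d i\<bar> < 1 / (2 * real n - 2)"
    and "z ^ (2*n) + (\<Sum>i=1..2*n-1. complex_of_real (d i) * z ^ i) + 1 = 0"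
  shows "cmod z = 1"
proof -
  define c where "c i = (if i = 0 \<or> i = 2*n then 1 else d i)" for i
  have "n \<ge> 1" using assms(1) by simp
  moreover have "c (2*n - i) = c i" if "i \<le> 2*n" for i
    using assms(2)[of i] that by (auto simp: c_def)
  moreover have "c (2*n) = 1" by (simp add: c_def)
  moreover have "(\<Sum>i=1..2*n-1. \<bar>c i\<bar>) < 2"
  proof -
    have "(\<Sum>i=1..2*n-1. \<bar>c i\<bar>) < (\<Sum>i=1..2*n-1. 1 / (2 * real n - 2))"
      using assms(1,3) by (intro sum_strict_mono) (auto simp: c_def)
    also have "\<dots> \<le> 2"
      using assms(1) by (simp add: of_nat_diff divide_le_eq)
    finally show ?thesis .
  qed
  moreover have "(\<Sum>i\<le>2*n. complex_of_real (c i) * z ^ i) = 0"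
  proof -
    have "(\<Sum>i=1..2*n-1. complex_of_real (c i) * z ^ i) = (\<Sum>i=1..2*n-1. complex_of_real (d i) * z ^ i)"
      by (rule sum.cong) (auto simp: c_def)
    then show ?thesis
      using assms(1,4) by (simp add: sum_atMost_split_ends c_def add_ac)
  qed
  ultimately show ?thesis by (rule palindromic_roots_on_unit_circle)
qed

end
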